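(* Let $\mathbb{K}$ be a field and consider the algebra $\mathbb{K}\langle\alpha_2,\alpha_3\rangle/I$, where $I$ is the two-sided ideal $$I=\langle\alpha_2^3,\ \alpha_3^2-\alpha_3,\ (\alpha_3\alpha_2)^2\alpha_3-4\alpha_3\alpha_2^2\alpha_3\rangle.$$ Let $R=\mathbb{K}\langle\alpha_2\rangle/I$ denote the subalgebra of $\mathbb{K}\langle\alpha_2,\alpha_3\rangle/I$ generated by the class of $\alpha_2$. Then $$\{(\alpha_3\alpha_2)^n: n\ge0\}\cup\{(\alpha_3\alpha_2)^n\alpha_3: n\ge0\}\cup\{(\alpha_3\alpha_2)^n\alpha_2: n\ge1\}$$ (classes modulo $I$) is a system of generators for $\mathbb{K}\langle\alpha_2,\alpha_3\rangle/I$ as a free left $R$-module.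
   Context: $\mathbb{K}\langle\alpha_2,\alpha_3\rangle$ denotes the free (noncommutative) associative $\mathbb{K}$-algebra on $\alpha_2,\alpha_3$.
   Formalization: The field $\mathbb{K}$ has characteristic different from 2. The statement above fails without it. *)

theory Defs
  imports Main "HOL-Library.Poly_Mapping"
begin

text \<open>Free noncommutative associative algebra K<alpha2, alpha3> over a field:
  finitely supported K-valued functions on words in the two letters,
  with convolution product induced by concatenation of words.\<close>

datatype gen = A2 | A3

datatype word = Word "gen list"

instantiation word :: monoid_add
begin
definition zero_word :: word where "zero_word = Word []"
fun plus_word :: "word \<Rightarrow> word \<Rightarrow> word" where
  "plus_word (Word u) (Word v) = Word (u @ v)"
instance
proof
  fix a b c :: word
  show "a + b + c = a + (b + c)" by (cases a; cases b; cases c) simp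
  show "0 + a = a" by (cases a) (simp add: zero_word_def)
  show "a + 0 = a" by (cases a) (simp add: zero_word_def)
qed
end

type_synonym 'k ncpoly = "word \<Rightarrow>\<^sub>0 'k"

definition var :: "gen \<Rightarrow> 'k::ring_1 ncpoly" where
  "var g = Poly_Mapping.single (Word [g]) 1"

definition const :: "'k::ring_1 \<Rightarrow> 'k ncpoly" where
  "const c = Poly_Mapping.single 0 c"

inductive_set ideal_gen :: "'k::ring_1 ncpoly set \<Rightarrow> 'k ncpoly set" for G where
  zero: "0 \<in> ideal_gen G"
| gen: "g \<in> G \<Longrightarrow> a * g * b \<in> ideal_gen G"
| add: "x \<in> ideal_gen G \<Longrightarrow> y \<in> ideal_gen G \<Longrightarrow> x + y \<in> ideal_gen G"

inductive_set subalg_gen :: "'k::ring_1 ncpoly set \<Rightarrow> 'k ncpoly set" for S where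
  base: "s \<in> S \<Longrightarrow> s \<in> subalg_gen S"
| const: "const c \<in> subalg_gen S"
| add: "x \<in> subalg_gen S \<Longrightarrow> y \<in> subalg_gen S \<Longrightarrow> x + y \<in> subalg_gen S"
| mult: "x \<in> subalg_gen S \<Longrightarrow> y \<in> subalg_gen S \<Longrightarrow> x * y \<in> subalg_gen S"

definition I_rel :: "'k::ring_1 ncpoly set" where
  "I_rel = ideal_gen {var A2 ^ 3, var A3 ^ 2 - var A3,
      (var A3 * var A2) ^ 2 * var A3 - 4 * (var A3 * var A2 ^ 2 * var A3)}"

definition basis_idx :: "(nat \<times> nat) set" where
  "basis_idx = {(k, n). k = 0 \<or> k = 1 \<or> (k = 2 \<and> n \<ge> 1)}"

fun basis_elem :: "nat \<times> nat \<Rightarrow> 'k::ring_1 ncpoly" where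
  "basis_elem (k, n) =
     (if k = 0 then (var A3 * var A2) ^ n
      else if k = 1 then (var A3 * var A2) ^ n * var A3
      else (var A3 * var A2) ^ n * var A2)"

text \<open>Representatives (in the free algebra) of elements of R, the subalgebra of the
  quotient generated by the class of alpha2: R is the image of subalg_gen {alpha2}.\<close>
definition free_left_basis_mod ::
  "'k::ring_1 ncpoly set \<Rightarrow> 'k ncpoly set \<Rightarrow> 'i set \<Rightarrow> ('i \<Rightarrow> 'k ncpoly) \<Rightarrow> bool" where
  "free_left_basis_mod I Rrep J e \<longleftrightarrow>
     (\<forall>p. \<exists>F c. finite F \<and> F \<subseteq> J \<and> (\<forall>j\<in>F. c j \<in> Rrep) \<and>
                p - (\<Sum>j\<in>F. c j * e j) \<in> I) \<and>
     (\<forall>F c. finite F \<longrightarrow> F \<subseteq> J \<longrightarrow> (\<forall>j\<in>F. c j \<in> Rrep) \<longrightarrow>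
            (\<Sum>j\<in>F. c j * e j) \<in> I \<longrightarrow> (\<forall>j\<in>F. c j \<in> I))"

end

theory Submission
  imports Defs
begin

text \<open>Write \<open>a = \<alpha>\<^sub>2\<close>, \<open>b = \<alpha>\<^sub>3\<close> and \<open>e\<^sub>j\<close> for the proposed generators.
  Modulo \<open>I\<close>, left multiplication by a letter sends a normal form \<open>a\<^sup>i e\<^sub>j\<close> (\<open>i \<le> 2\<close>)
  to a scalar multiple of another one, using \<open>a\<^sup>3 = 0\<close>, \<open>b e\<^sub>j = e\<^sub>j\<close> and
  \<open>b a\<^sup>2 e\<^sub>j = (1/4) (b a)\<^sup>2 e\<^sub>j\<close> whenever \<open>e\<^sub>j\<close> starts with \<open>b\<close> (this needs \<open>2 \<noteq> 0\<close>).
  Running this automaton over a word from right to left defines a linear map \<open>reduce\<close> from the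
  free algebra to the span of the normal forms. Every word is congruent to its reduction, which
  gives spanning over \<open>R = K[a]\<close>. Conversely every relator acts as zero on every normal form, so
  \<open>reduce\<close> vanishes on \<open>I\<close>; as the coordinate of \<open>a\<^sup>i e\<^sub>j\<close> in \<open>reduce (\<Sum> c\<^sub>j e\<^sub>j)\<close> is the
  coefficient of \<open>a\<^sup>i\<close> in \<open>c\<^sub>j\<close>, a combination lying in \<open>I\<close> has coefficients divisible by
  \<open>a\<^sup>3\<close>, hence in \<open>I\<close>.\<close>

abbreviation keys where "keys \<equiv> Poly_Mapping.keys"
abbreviation lookup where "lookup \<equiv> Poly_Mapping.lookup"
abbreviation single where "single \<equiv> Poly_Mapping.single"

section \<open>Ideals and spanning in the free algebra\<close>

lemma ideal_gen_uminus: "x \<in> ideal_gen G \<Longrightarrow> - x \<in> ideal_gen G"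
proof (induction rule: ideal_gen.induct)
  case (gen g a b)
  then show ?case using ideal_gen.gen[of g G "- a" b] by simp
next
  case (add x y)
  then show ?case by (metis ideal_gen.add minus_add_distrib)
qed (simp add: ideal_gen.zero)

lemma ideal_gen_mult_left: "x \<in> ideal_gen G \<Longrightarrow> c * x \<in> ideal_gen G"
proof (induction rule: ideal_gen.induct)
  case (gen g a b)
  then show ?case using ideal_gen.gen[of g G "c * a" b] by (simp add: mult.assoc)
qed (simp_all add: ideal_gen.zero ideal_gen.add distrib_left)

lemma ideal_gen_sum:
  "(\<And>i. i \<in> A \<Longrightarrow> f i \<in> ideal_gen G) \<Longrightarrow> (\<Sum>i\<in>A. f i) \<in> ideal_gen G"
  by (induction A rule: infinite_finite_induct) (auto intro: ideal_gen.zero ideal_gen.add)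

lemma poly_mapping_sum_single:
  "(p :: 'a \<Rightarrow>\<^sub>0 'b::comm_monoid_add) = (\<Sum>k\<in>keys p. single k (lookup p k))"
  by (rule poly_mapping_eqI) (simp add: lookup_sum lookup_single when_def sum.delta in_keys_iff)

lemma additive_vanishes_on_ideal_gen:
  fixes \<Phi> :: "'k::ring_1 ncpoly \<Rightarrow> 'b::ab_group_add"
  assumes additive: "\<And>p q. \<Phi> (p + q) = \<Phi> p + \<Phi> q"
    and vanishes: "\<And>g u v a b. g \<in> G \<Longrightarrow> \<Phi> (single u a * g * single v b) = 0"
    and "p \<in> ideal_gen G"
  shows "\<Phi> p = 0"
proof -
  have zero: "\<Phi> 0 = 0"
    using additive[of 0 0] by simp
  have sum: "\<Phi> (\<Sum>i\<in>A. f i) = (\<Sum>i\<in>A. \<Phi> (f i))" for A and f :: "'i \<Rightarrow> 'k ncpoly"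
    by (induction A rule: infinite_finite_induct) (simp_all add: zero additive)
  from \<open>p \<in> ideal_gen G\<close> show ?thesis
  proof (induction rule: ideal_gen.induct)
    case (gen g x y)
    have "x * g * y = (\<Sum>u\<in>keys x. \<Sum>v\<in>keys y.
        single u (lookup x u) * g * single v (lookup y v))"
      by (subst (1 2) poly_mapping_sum_single)
        (simp add: sum_distrib_left sum_distrib_right sum.swap[of _ "keys x"])
    then show ?case
      by (simp add: sum vanishes[OF gen])
  qed (simp_all add: zero additive)
qed

lemma single_Word_mult:
  "single (Word u) (a::'k::ring_1) * single (Word v) b
   = single (Word (u @ v)) (a * b)"
  by (simp add: mult_single)

lemma var_power: "(var x :: 'k::ring_1 ncpoly) ^ n = single (Word (replicate n x)) 1"
  by (induction n) (simp_all add: var_def single_Word_mult flip: zero_word_def)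

lemma const_mult: "const (c::'k::ring_1) * const d = const (c * d)"
  by (simp add: const_def mult_single)

lemma const_one [simp]: "const (1::'k::ring_1) = 1"
  by (simp add: const_def)

lemma const_numeral [simp]: "const (numeral m :: 'k::ring_1) = numeral m"
  by (simp add: const_def)

lemma const_commute: "const (c::'k::comm_ring_1) * p = p * const c"
  by (subst (1 2) poly_mapping_sum_single)
    (simp add: sum_distrib_left sum_distrib_right const_def mult_single mult.commute)

fun letters :: "word \<Rightarrow> gen list" where
  "letters (Word l) = l"

lemma var_power_in_subalg_gen: "var x ^ n \<in> subalg_gen {var x :: 'k::ring_1 ncpoly}"
  by (induction n) (use subalg_gen.const[of 1] in \<open>simp_all add: subalg_gen.mult subalg_gen.base\<close>)

lemma keys_subalg_gen_var:
  "c \<in> subalg_gen {var x :: 'k::ring_1 ncpoly} \<Longrightarrow>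
    keys c \<subseteq> range (\<lambda>m. Word (replicate m x))"
proof (induction rule: subalg_gen.induct)
  case (base s)
  then show ?case
    using rangeI[of "\<lambda>m. Word (replicate m x)" 1] by (simp add: var_def)
next
  case (const c)
  then show ?case
    using rangeI[of "\<lambda>m. Word (replicate m x)" 0] by (simp add: const_def zero_word_def)
next
  case (add p q)
  then show ?case using keys_add[of p q] by blast
next
  case (mult p q)
  have "a + b \<in> range (\<lambda>m. Word (replicate m x))" if "a \<in> keys p" "b \<in> keys q" for a b
  proof -
    obtain m1 m2 where "a = Word (replicate m1 x)" "b = Word (replicate m2 x)"
      using mult.IH \<open>a \<in> keys p\<close> \<open>b \<in> keys q\<close> by blast
    then have "a + b = Word (replicate (m1 + m2) x)"
      by (simp add: replicate_add)
    then show ?thesis by blast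
  qed
  then show ?case using keys_mult[of p q] by blast
qed

lemma in_ideal_gen_if_powers_of_var_vanish_below:
  assumes "var x ^ d \<in> G"
    and keys: "keys c \<subseteq> range (\<lambda>m. Word (replicate m x))"
    and low: "\<And>m. m < d \<Longrightarrow> lookup c (Word (replicate m x)) = 0"
  shows "c \<in> ideal_gen (G :: 'k::ring_1 ncpoly set)"
proof -
  have "single w (lookup c w) \<in> ideal_gen G" if "w \<in> keys c" for w
  proof -
    obtain m where w: "w = Word (replicate m x)"
      using keys \<open>w \<in> keys c\<close> by blast
    have "d \<le> m"
      using low[of m] \<open>w \<in> keys c\<close> by (force simp: w in_keys_iff)
    then have "single w (lookup c w)
        = single (Word (replicate (m - d) x)) (lookup c w) * var x ^ d * 1"
      by (simp add: w var_power single_Word_mult flip: replicate_add)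
    then show ?thesis
      using ideal_gen.gen[OF assms(1)] by metis
  qed
  then show ?thesis
    by (subst poly_mapping_sum_single) (rule ideal_gen_sum)
qed

definition left_span_mod ::
  "'k::ring_1 ncpoly set \<Rightarrow> 'k ncpoly set \<Rightarrow> 'i set \<Rightarrow> ('i \<Rightarrow> 'k ncpoly) \<Rightarrow>
    'k ncpoly \<Rightarrow> bool" where
  "left_span_mod I Rrep J e p \<longleftrightarrow>
     (\<exists>F c. finite F \<and> F \<subseteq> J \<and> (\<forall>j\<in>F. c j \<in> Rrep) \<and>
        p - (\<Sum>j\<in>F. c j * e j) \<in> I)"

lemma left_span_mod_add:
  assumes "left_span_mod (ideal_gen G) (subalg_gen S) J e p"
    and "left_span_mod (ideal_gen G) (subalg_gen S) J e q"
  shows "left_span_mod (ideal_gen G) (subalg_gen S) J e (p + q)"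
proof -
  obtain F1 c1 where F1: "finite F1" "F1 \<subseteq> J" "\<forall>j\<in>F1. c1 j \<in> subalg_gen S"
    and p: "p - (\<Sum>j\<in>F1. c1 j * e j) \<in> ideal_gen G"
    using assms(1) unfolding left_span_mod_def by blast
  obtain F2 c2 where F2: "finite F2" "F2 \<subseteq> J" "\<forall>j\<in>F2. c2 j \<in> subalg_gen S"
    and q: "q - (\<Sum>j\<in>F2. c2 j * e j) \<in> ideal_gen G"
    using assms(2) unfolding left_span_mod_def by blast
  define c where "c j = (if j \<in> F1 then c1 j else 0) + (if j \<in> F2 then c2 j else 0)" for j
  have "(\<Sum>j\<in>F1 \<union> F2. c j * e j) = (\<Sum>j\<in>F1 \<union> F2.
      (if j \<in> F1 then c1 j * e j else 0) + (if j \<in> F2 then c2 j * e j else 0))"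
    by (rule sum.cong) (simp_all add: c_def distrib_right)
  also have "\<dots> = (\<Sum>j\<in>F1. c1 j * e j) + (\<Sum>j\<in>F2. c2 j * e j)"
    using F1(1) F2(1) sum.inter_restrict[of "F1 \<union> F2" "\<lambda>j. c1 j * e j" F1]
      sum.inter_restrict[of "F1 \<union> F2" "\<lambda>j. c2 j * e j" F2]
    by (simp add: sum.distrib Int_absorb1 Int_absorb2)
  finally have "p + q - (\<Sum>j\<in>F1 \<union> F2. c j * e j)
      = (p - (\<Sum>j\<in>F1. c1 j * e j)) + (q - (\<Sum>j\<in>F2. c2 j * e j))"
    by (simp add: algebra_simps)
  then have "p + q - (\<Sum>j\<in>F1 \<union> F2. c j * e j) \<in> ideal_gen G"
    using ideal_gen.add[OF p q] by (simp only:)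
  moreover have "\<forall>j\<in>F1 \<union> F2. c j \<in> subalg_gen S"
    using F1(3) F2(3) subalg_gen.const[of 0 S]
    by (auto simp: c_def const_def intro: subalg_gen.add)
  ultimately show ?thesis
    unfolding left_span_mod_def using F1(1,2) F2(1,2)
    by (intro exI[of _ "F1 \<union> F2"] exI[of _ c]) simp
qed

lemma left_span_mod_if_monomials:
  assumes "\<And>w a. left_span_mod (ideal_gen G) (subalg_gen S) J e (single w a)"
  shows "left_span_mod (ideal_gen G) (subalg_gen S) J e p"
proof -
  have "left_span_mod (ideal_gen G) (subalg_gen S) J e (\<Sum>w\<in>A. single w (lookup p w))"
    if "finite A" for A
    using that
  proof (induction A rule: finite_induct)
    case empty
    then show ?case
      unfolding left_span_mod_def by (intro exI[of _ "{}"]) (simp add: ideal_gen.zero)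
  qed (simp add: assms left_span_mod_add)
  then show ?thesis
    by (subst poly_mapping_sum_single) simp
qed

section \<open>The normal form automaton\<close>

lemma four_neq_zero: "(2::'k::field) \<noteq> 0 \<Longrightarrow> (4::'k) \<noteq> 0"
  using mult_eq_0_iff[of "2::'k" 2] by simp

type_synonym state = "nat \<times> nat \<times> nat"

definition state_rep :: "state \<Rightarrow> 'k::ring_1 ncpoly" where
  "state_rep = (\<lambda>(i, j). var A2 ^ i * basis_elem j)"

definition valid_state :: "state \<Rightarrow> bool" where
  "valid_state = (\<lambda>(i, j). i \<le> 2 \<and> j \<in> basis_idx)"

text \<open>The coefficient \<open>0\<close> encodes \<open>a\<^sup>3 \<in> I\<close>, the
  coefficient \<open>1/4\<close> the third relation; the exceptions at \<open>(k, n) = (0, 0)\<close> are the cases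
  where \<open>e\<^sub>(\<^sub>0\<^sub>,\<^sub>0\<^sub>) = 1\<close> does not start with \<open>b\<close>.\<close>

fun step_state :: "gen \<Rightarrow> state \<Rightarrow> state" where
  "step_state A2 (i, k, n) = (if i < 2 then (Suc i, k, n) else (0, 0, 0))"
| "step_state A3 (i, k, n) =
     (if i = 0 then (if (k, n) = (0, 0) then (0, 1, 0) else (0, k, n))
      else if i = 1 then (0, k, Suc n)
      else if (k, n) = (0, 0) then (0, 2, 1) else (0, k, n + 2))"

fun step_coeff :: "gen \<Rightarrow> state \<Rightarrow> 'k::field" where
  "step_coeff A2 (i, k, n) = (if i < 2 then 1 else 0)"
| "step_coeff A3 (i, k, n) = (if 2 \<le> i \<and> (k, n) \<noteq> (0, 0) then inverse 4 else 1)"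

primrec run_state :: "gen list \<Rightarrow> state \<Rightarrow> state" where
  "run_state [] s = s"
| "run_state (x # u) s = step_state x (run_state u s)"

primrec run_coeff :: "gen list \<Rightarrow> state \<Rightarrow> 'k::field" where
  "run_coeff [] s = 1"
| "run_coeff (x # u) s = run_coeff u s * step_coeff x (run_state u s)"

lemma run_state_append: "run_state (u @ v) s = run_state u (run_state v s)"
  by (induction u) simp_all

lemma run_coeff_append: "run_coeff (u @ v) s = run_coeff v s * run_coeff u (run_state v s)"
  by (induction u) (simp_all add: run_state_append mult.assoc)

lemma run_A2_cube: "run_coeff [A2, A2, A2] s = 0"
  by (cases s) auto

lemma run_A3_idempotent:
  "run_state [A3, A3] s = run_state [A3] s"
  "run_coeff [A3, A3] s = run_coeff [A3] s"
  by (cases s; auto)+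

lemma run_third_relator:
  assumes "(2::'k::field) \<noteq> 0"
  shows "run_state [A3, A2, A3, A2, A3] s = run_state [A3, A2, A2, A3] s"
    and "run_coeff [A3, A2, A3, A2, A3] s = (4::'k) * run_coeff [A3, A2, A2, A3] s"
  using four_neq_zero[OF assms] by (cases s; auto)+

lemma valid_run_state: "valid_state (run_state l (0, 0, 0))"
proof (induction l)
  case (Cons x l)
  then show ?case
    by (cases x; cases "run_state l (0, 0, 0)") (auto simp: valid_state_def basis_idx_def)
qed (simp add: valid_state_def basis_idx_def)

text \<open>\<open>lookup (reduce p) (i, j)\<close> is the coordinate of \<open>a\<^sup>i e\<^sub>j\<close> in the normal form of \<open>p\<close>.\<close>
definition reduce :: "'k::field ncpoly \<Rightarrow> (state \<Rightarrow>\<^sub>0 'k)" where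
  "reduce p = (\<Sum>w\<in>keys p.
     single (run_state (letters w) (0, 0, 0)) (lookup p w * run_coeff (letters w) (0, 0, 0)))"

lemma reduce_add: "reduce (p + q) = reduce p + reduce q"
  unfolding reduce_def
  by (rule setsum_keys_plus_distrib) (simp_all add: distrib_right single_add)

lemma reduce_zero [simp]: "reduce 0 = 0"
  by (simp add: reduce_def)

lemma reduce_sum: "reduce (\<Sum>i\<in>A. f i) = (\<Sum>i\<in>A. reduce (f i))"
  by (induction A rule: infinite_finite_induct) (simp_all add: reduce_add)

lemma reduce_single:
  "reduce (single w a)
   = single (run_state (letters w) (0, 0, 0)) (a * run_coeff (letters w) (0, 0, 0))"
  by (cases "a = 0") (simp_all add: reduce_def)

definition monomial_relators :: "'k::ring_1 ncpoly set" where
  "monomial_relators = {single (Word [A2, A2, A2]) 1,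
      single (Word [A3, A3]) 1 - single (Word [A3]) 1,
      single (Word [A3, A2, A3, A2, A3]) 1 - single (Word [A3, A2, A2, A3]) 4}"

lemma I_rel_monomial_relators: "I_rel = ideal_gen monomial_relators"
proof -
  have "(4 :: 'a ncpoly) * single w 1 = single w 4" for w
    by (metis single_numeral mult_single add_0 mult.right_neutral)
  then show ?thesis
    by (simp add: I_rel_def monomial_relators_def var_power numeral_3_eq_3 power2_eq_square
        var_def single_Word_mult)
qed

lemma reduce_relator_vanishes:
  assumes "\<And>s. run_state W s = run_state W' s"
    and "\<And>s. run_coeff W s = r * run_coeff W' s"
  shows "reduce (single u a
      * (single (Word W) 1 - single (Word W') r)
      * single v b) = 0"
proof -
  have "single u a * (single (Word W) 1 - single (Word W') r)
      * single v b
    = single (Word (letters u @ W @ letters v)) (a * b)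
      + single (Word (letters u @ W' @ letters v)) (- (a * r * b))"
    by (cases u; cases v) (simp add: algebra_simps mult_single single_uminus)
  then show ?thesis
    using assms by (simp add: reduce_add reduce_single run_state_append run_coeff_append
        flip: single_add)
qed

lemma reduce_I_rel:
  assumes "(2::'k::field) \<noteq> 0" and "p \<in> (I_rel :: 'k ncpoly set)"
  shows "reduce p = 0"
  using assms(2) unfolding I_rel_monomial_relators
proof (rule additive_vanishes_on_ideal_gen[OF reduce_add, rotated])
  fix g :: "'k ncpoly" and u v a b
  assume "g \<in> monomial_relators"
  then show "reduce (single u a * g * single v b) = 0"
    using reduce_relator_vanishes[of "[A2, A2, A2]" "[A2, A2, A2]" 0]
      reduce_relator_vanishes[of "[A3, A3]" "[A3]" 1]
      reduce_relator_vanishes[of "[A3, A2, A3, A2, A3]" "[A3, A2, A2, A3]" "4::'k"]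
    by (auto simp: monomial_relators_def run_A2_cube run_A3_idempotent run_third_relator[OF assms(1)]
        simp del: run_state.simps run_coeff.simps)
qed

section \<open>Independence\<close>

fun basis_word :: "nat \<times> nat \<Rightarrow> gen list" where
  "basis_word (k, n) =
     (if k = 0 then concat (replicate n [A3, A2])
      else if k = 1 then concat (replicate n [A3, A2]) @ [A3]
      else concat (replicate (n - 1) [A3, A2]) @ [A3, A2, A2])"

lemma A3_A2_power:
  "(var A3 * var A2 :: 'k::ring_1 ncpoly) ^ n = single (Word (concat (replicate n [A3, A2]))) 1"
  by (induction n) (simp_all add: var_def single_Word_mult flip: zero_word_def)

lemma basis_elem_single:
  assumes "j \<in> basis_idx"
  shows "(basis_elem j :: 'k::ring_1 ncpoly) = single (Word (basis_word j)) 1"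
proof -
  obtain k n where j: "j = (k, n)" by (cases j)
  consider "k = 0" | "k = 1" | m where "k = 2" "n = Suc m"
    using assms by (auto simp: j basis_idx_def dest: Suc_le_D)
  then show ?thesis
  proof cases
    case 1
    then show ?thesis
      by (simp add: j A3_A2_power)
  next
    case 2
    then show ?thesis
      unfolding j basis_elem.simps A3_A2_power by (simp add: var_def single_Word_mult)
  next
    case 3
    then have "(basis_elem j :: 'k ncpoly) = (var A3 * var A2) ^ m * (var A3 * var A2 * var A2)"
      by (simp add: j mult.assoc power_Suc2 del: power_Suc)
    then show ?thesis
      unfolding A3_A2_power by (simp add: 3 j var_def single_Word_mult)
  qed
qed

lemma run_A3_A2_power:
  "run_state (concat (replicate n [A3, A2])) (0, k, m) = (0, k, m + n)"
  "run_coeff (concat (replicate n [A3, A2])) (0, k, m) = 1"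
  by (induction n) (simp_all add: run_state_append run_coeff_append)

lemma run_basis_word:
  assumes "j \<in> basis_idx"
  shows "run_state (basis_word j) (0, 0, 0) = (0, j)" and "run_coeff (basis_word j) (0, 0, 0) = 1"
  using assms by (auto simp: basis_idx_def run_state_append run_coeff_append run_A3_A2_power)

lemma run_A2_power:
  assumes "i + m \<le> 2"
  shows "run_state (replicate m A2) (i, j) = (i + m, j) \<and> run_coeff (replicate m A2) (i, j) = 1"
proof -
  obtain k n where "j = (k, n)" by fastforce
  then show ?thesis
    using assms by (induction m) auto
qed

lemma run_A2_power_vanishes:
  assumes "3 \<le> m"
  shows "run_coeff (replicate m A2) s = 0"
proof -
  obtain d where "m = d + 3"
    using assms by (metis add.commute le_Suc_ex)
  then have "replicate m A2 = replicate d A2 @ replicate 3 A2"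
    by (simp only: replicate_add)
  moreover have "replicate 3 A2 = [A2, A2, A2]"
    by (simp add: numeral_3_eq_3)
  ultimately show ?thesis
    by (metis run_coeff_append run_A2_cube mult_zero_left)
qed

lemma reduce_A2_power_basis_word:
  assumes "j \<in> basis_idx"
  shows "reduce (single (Word (replicate m A2 @ basis_word j)) (a::'k::field))
    = (if m \<le> 2 then single (m, j) a else 0)"
  by (simp add: reduce_single run_state_append run_coeff_append run_basis_word[OF assms]
      run_A2_power run_A2_power_vanishes del: basis_word.simps)

lemma lookup_reduce_mult_basis_elem:
  assumes c: "c \<in> subalg_gen {var A2 :: 'k::field ncpoly}" and "j \<in> basis_idx" and "m \<le> 2"
  shows "lookup (reduce (c * basis_elem j)) (m, j')
    = (if j' = j then lookup c (Word (replicate m A2)) else 0)"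
proof -
  have "c * basis_elem j = (\<Sum>w\<in>keys c. single (w + Word (basis_word j)) (lookup c w))"
    by (subst poly_mapping_sum_single)
      (simp add: basis_elem_single[OF \<open>j \<in> basis_idx\<close>] sum_distrib_right mult_single)
  also have "\<dots> = (\<Sum>w\<in>keys c. single (Word (letters w @ basis_word j)) (lookup c w))"
    by (metis letters.simps plus_word.simps letters.cases)
  finally have "lookup (reduce (c * basis_elem j)) (m, j')
      = (\<Sum>w\<in>keys c.
          lookup (reduce (single (Word (letters w @ basis_word j)) (lookup c w))) (m, j'))"
    by (simp add: reduce_sum lookup_sum)
  also have "\<dots> = (\<Sum>w\<in>keys c. if w = Word (replicate m A2) \<and> j' = j then lookup c w else 0)"
  proof (rule sum.cong)
    fix w assume "w \<in> keys c"
    then obtain l where w: "w = Word (replicate l A2)"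
      using keys_subalg_gen_var[OF c] by blast
    show "lookup (reduce (single (Word (letters w @ basis_word j)) (lookup c w))) (m, j')
        = (if w = Word (replicate m A2) \<and> j' = j then lookup c w else 0)"
      using \<open>m \<le> 2\<close>
      by (auto simp: w reduce_A2_power_basis_word[OF \<open>j \<in> basis_idx\<close>] lookup_single)
  qed simp
  also have "\<dots> = (if j' = j then lookup c (Word (replicate m A2)) else 0)"
    by (auto simp: sum.delta in_keys_iff)
  finally show ?thesis .
qed

lemma basis_elem_independent:
  assumes "(2::'k::field) \<noteq> 0"
    and "finite F" "F \<subseteq> basis_idx" "\<forall>j\<in>F. c j \<in> subalg_gen {var A2 :: 'k ncpoly}"
    and "(\<Sum>j\<in>F. c j * basis_elem j) \<in> (I_rel :: 'k ncpoly set)"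
    and "j' \<in> F"
  shows "c j' \<in> I_rel"
proof -
  have "lookup (c j') (Word (replicate m A2)) = 0" if "m < 3" for m
  proof -
    have "0 = lookup (reduce (\<Sum>j\<in>F. c j * basis_elem j)) (m, j')"
      using reduce_I_rel[OF assms(1,5)] by simp
    also have "\<dots> = (\<Sum>j\<in>F. lookup (reduce (c j * basis_elem j)) (m, j'))"
      by (simp add: reduce_sum lookup_sum del: basis_elem.simps)
    also have "\<dots> = (\<Sum>j\<in>F. if j' = j then lookup (c j) (Word (replicate m A2)) else 0)"
      by (intro sum.cong refl lookup_reduce_mult_basis_elem) (use assms(3,4) \<open>m < 3\<close> in auto)
    also have "\<dots> = lookup (c j') (Word (replicate m A2))"
      using assms(2,6) by simp
    finally show ?thesis by simp
  qed
  then show ?thesis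
    unfolding I_rel_def
    using assms(4,6) keys_subalg_gen_var[of "c j'" A2]
    by (intro in_ideal_gen_if_powers_of_var_vanish_below[where d = 3]) auto
qed

section \<open>Spanning\<close>

lemma A2_cube_in_I_rel: "var A2 ^ 3 * X \<in> (I_rel :: 'k::ring_1 ncpoly set)"
  unfolding I_rel_def using ideal_gen.gen[of "var A2 ^ 3" _ 1 X] by simp

lemma A3_idempotent_mod_I_rel:
  "var A3 * (var A3 * X) - var A3 * X \<in> (I_rel :: 'k::ring_1 ncpoly set)"
  unfolding I_rel_def using ideal_gen.gen[of "var A3 ^ 2 - var A3" _ 1 X]
  by (simp add: power2_eq_square algebra_simps)

lemma third_relation_mod_I_rel:
  assumes "(2::'k::field) \<noteq> 0"
  shows "var A3 * (var A2 ^ 2 * (var A3 * X))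
      - const (inverse 4) * ((var A3 * var A2) * (var A3 * var A2) * (var A3 * X))
    \<in> (I_rel :: 'k ncpoly set)"
proof -
  let ?g = "(var A3 * var A2) ^ 2 * var A3 - 4 * (var A3 * var A2 ^ 2 * var A3) :: 'k ncpoly"
  have "const (inverse 4) * (4 :: 'k ncpoly) = 1"
    using four_neq_zero[OF assms] by (simp add: const_mult flip: const_numeral)
  then have "- (const (inverse 4) * ?g * X) = var A3 * (var A2 ^ 2 * (var A3 * X))
      - const (inverse 4) * ((var A3 * var A2) * (var A3 * var A2) * (var A3 * X))"
    by (simp add: algebra_simps power2_eq_square flip: mult.assoc)
  moreover have "- (const (inverse 4) * ?g * X) \<in> I_rel"
    unfolding I_rel_def by (intro ideal_gen_uminus ideal_gen.gen) simp
  ultimately show ?thesis by simp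
qed

lemma basis_elem_Suc: "basis_elem (k, Suc n) = var A3 * var A2 * basis_elem (k, n)"
  by (simp add: mult.assoc)

lemma basis_elem_starts_with_A3:
  assumes "j \<in> basis_idx" and "j \<noteq> (0, 0)"
  obtains X where "basis_elem j = var A3 * X"
proof -
  obtain k n where j: "j = (k, n)" by fastforce
  consider m where "n = Suc m" | "k = 1" "n = 0"
    using assms by (cases n) (auto simp: j basis_idx_def)
  then show ?thesis
  proof cases
    case 1
    then show ?thesis using that[of "var A2 * basis_elem (k, m)"] by (simp add: j mult.assoc)
  next
    case 2
    then show ?thesis using that[of 1] by (simp add: j)
  qed
qed

lemma A2_mult_state_rep_mod_I_rel:
  assumes "i \<le> 2"
  shows "var A2 * state_rep (i, k, n)
      - const (step_coeff A2 (i, k, n)) * state_rep (step_state A2 (i, k, n))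
    \<in> (I_rel :: 'k::field ncpoly set)"
  using assms A2_cube_in_I_rel[of "basis_elem (k, n)"] ideal_gen.zero
  by (auto simp: I_rel_def state_rep_def const_def mult.assoc numeral_3_eq_3 numeral_2_eq_2
      simp del: basis_elem.simps)

lemma A3_mult_state_rep_mod_I_rel:
  assumes "(2::'k::field) \<noteq> 0" and "i \<le> 2" and "(k, n) \<in> basis_idx"
  shows "var A3 * state_rep (i, k, n)
      - const (step_coeff A3 (i, k, n)) * state_rep (step_state A3 (i, k, n))
    \<in> (I_rel :: 'k ncpoly set)"
proof -
  have zero: "0 \<in> (I_rel :: 'k ncpoly set)"
    unfolding I_rel_def by (rule ideal_gen.zero)
  consider "i = 0" | "i = 1" | "i = 2"
    using assms(2) by linarith
  then show ?thesis
  proof cases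
    case 1
    show ?thesis
    proof (cases "(k, n) = (0, 0)")
      case False
      obtain X :: "'k ncpoly" where X: "basis_elem (k, n) = var A3 * X"
        using basis_elem_starts_with_A3[OF assms(3) False] by blast
      have eq: "var A3 * state_rep (i, k, n)
          - const (step_coeff A3 (i, k, n)) * state_rep (step_state A3 (i, k, n))
          = var A3 * basis_elem (k, n) - basis_elem (k, n)"
        using False by (auto simp: 1 state_rep_def simp del: basis_elem.simps)
      show ?thesis
        unfolding eq X by (rule A3_idempotent_mod_I_rel)
    qed (use zero in \<open>simp add: 1 state_rep_def\<close>)
  next
    case 2
    then show ?thesis
      using zero by (simp add: state_rep_def basis_elem_Suc mult.assoc del: basis_elem.simps)
  next
    case 3
    show ?thesis
    proof (cases "(k, n) = (0, 0)")
      case False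
      obtain X :: "'k ncpoly" where X: "basis_elem (k, n) = var A3 * X"
        using basis_elem_starts_with_A3[OF assms(3) False] by blast
      have eq: "var A3 * state_rep (i, k, n)
          - const (step_coeff A3 (i, k, n)) * state_rep (step_state A3 (i, k, n))
          = var A3 * (var A2 ^ 2 * basis_elem (k, n))
            - const (inverse 4) * ((var A3 * var A2) * (var A3 * var A2) * basis_elem (k, n))"
        using False
        by (auto simp: 3 state_rep_def basis_elem_Suc mult.assoc simp del: basis_elem.simps)
      show ?thesis
        unfolding eq X by (rule third_relation_mod_I_rel[OF assms(1)])
    qed (use zero in \<open>simp add: 3 state_rep_def power2_eq_square mult.assoc\<close>)
  qed
qed

lemma letter_mult_state_rep_mod_I_rel:
  assumes "(2::'k::field) \<noteq> 0" and "valid_state s"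
  shows "var x * state_rep s - const (step_coeff x s) * state_rep (step_state x s)
    \<in> (I_rel :: 'k ncpoly set)"
proof -
  obtain i k n where s: "s = (i, k, n)" by (cases s)
  have "i \<le> 2" "(k, n) \<in> basis_idx"
    using assms(2) by (auto simp: s valid_state_def)
  then show ?thesis
    unfolding s
    by (cases x) (simp_all only: A2_mult_state_rep_mod_I_rel A3_mult_state_rep_mod_I_rel[OF assms(1)])
qed

lemma monomial_mod_I_rel:
  assumes "(2::'k::field) \<noteq> 0"
  shows "single (Word l) 1 - const (run_coeff l (0, 0, 0)) * state_rep (run_state l (0, 0, 0))
    \<in> (I_rel :: 'k ncpoly set)"
proof (induction l)
  case Nil
  show ?case
    unfolding I_rel_def by (simp add: state_rep_def ideal_gen.zero flip: zero_word_def)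
next
  case (Cons x l)
  let ?s = "run_state l (0, 0, 0)" and ?c = "run_coeff l (0, 0, 0) :: 'k"
  have commute: "var x * (const ?c * Y) = const ?c * (var x * Y)" for Y :: "'k ncpoly"
    by (metis const_commute mult.assoc)
  have "single (Word (x # l)) (1::'k) = var x * single (Word l) 1"
    by (simp add: var_def single_Word_mult)
  then have "single (Word (x # l)) 1
      - const (run_coeff (x # l) (0, 0, 0)) * state_rep (run_state (x # l) (0, 0, 0))
    = var x * (single (Word l) 1 - const ?c * state_rep ?s)
      + const ?c * (var x * state_rep ?s - const (step_coeff x ?s) * state_rep (step_state x ?s))"
    by (simp add: algebra_simps commute flip: const_mult)
  moreover have "\<dots> \<in> I_rel"
    using Cons.IH letter_mult_state_rep_mod_I_rel[OF assms valid_run_state]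
    unfolding I_rel_def by (intro ideal_gen.add ideal_gen_mult_left)
  ultimately show ?case by simp
qed

lemma left_span_mod_monomial:
  assumes "(2::'k::field) \<noteq> 0"
  shows "left_span_mod I_rel (subalg_gen {var A2}) basis_idx basis_elem (single w (a::'k))"
proof -
  obtain l where w: "w = Word l" by (cases w)
  obtain i j where s: "run_state l (0, 0, 0) = (i, j)" by (metis surj_pair)
  define c where "c = const (a * run_coeff l (0, 0, 0)) * var A2 ^ i"
  have "const a * single (Word l) 1 = single w a"
    by (simp add: w const_def mult_single)
  then have "single w a - c * basis_elem j
      = const a * (single (Word l) 1
          - const (run_coeff l (0, 0, 0)) * state_rep (run_state l (0, 0, 0)))"
    by (simp add: s c_def state_rep_def right_diff_distrib mult.assoc flip: const_mult
        del: basis_elem.simps)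
  moreover have "\<dots> \<in> I_rel"
    using monomial_mod_I_rel[OF assms] unfolding I_rel_def by (rule ideal_gen_mult_left)
  moreover have "j \<in> basis_idx"
    using valid_run_state[of l] by (simp add: s valid_state_def)
  moreover have "c \<in> subalg_gen {var A2}"
    unfolding c_def by (intro subalg_gen.mult subalg_gen.const var_power_in_subalg_gen)
  ultimately show ?thesis
    unfolding left_span_mod_def by (intro exI[of _ "{j}"] exI[of _ "\<lambda>_. c"]) auto
qed

theorem lemma3:
  fixes dummy :: "'k::field"
  assumes "(2::'k) \<noteq> 0"
  shows "free_left_basis_mod (I_rel :: 'k ncpoly set) (subalg_gen {var A2}) basis_idx basis_elem"
proof -
  have "left_span_mod (I_rel :: 'k ncpoly set) (subalg_gen {var A2}) basis_idx basis_elem p" for p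
    using left_span_mod_monomial[OF assms] unfolding I_rel_def by (rule left_span_mod_if_monomials)
  then show ?thesis
    unfolding free_left_basis_mod_def left_span_mod_def
    using basis_elem_independent[OF assms] by blast
qed

end
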